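(* Let $a>0$, $b>0$ and $f(x)=a^2\left(\frac{1+b^2x}{b^2+x}\right)^2$ on $(0,\infty)$. 1) If $b>1$, then for every $x_0>0$ the sequence $x_n=f(x_{n-1})$, $n\ge1$, converges (to a fixed point of $f$). 2) If $b<1$, then for every $y_0>0$ the sequence $y_n=g(y_{n-1})$, $n\ge1$, converges, where $g=f\circ f$. *)

theory Defs
  imports Complex_Main
begin

definition lemma4_f :: "real \<Rightarrow> real \<Rightarrow> real \<Rightarrow> real" where
  "lemma4_f a b x = a^2 * ((1 + b^2 * x) / (b^2 + x))^2"

end

theory Submission
  imports Defs
begin

(*
  The map f(x) = a^2 h(x)^2 with h(x) = (1 + c x)/(c + x), c = b^2, is studied
  on the positive reals.  Writing h(x) = (c * (1/c) + x * c)/(c + x) shows that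
  h(x) is a weighted average of 1/c and c, so f maps (0,oo) into a compact
  interval [lo, hi] with lo > 0.  Moreover h is nondecreasing when c >= 1 and
  nonincreasing when c <= 1, hence f is nondecreasing for b > 1, and for b < 1
  the second iterate f o f is nondecreasing.
*)

text \<open>If the first step of an orbit of a nondecreasing map goes up (down), so
  do all later steps: the orbit of a monotone map is a monotone sequence.\<close>

lemma iterate_monoseq:
  fixes F :: "real \<Rightarrow> real"
  assumes mono: "\<And>x y. 0 < x \<Longrightarrow> x \<le> y \<Longrightarrow> F x \<le> F y"
    and pos: "\<And>n. 0 < (F ^^ n) x0"
  shows "monoseq (\<lambda>n. (F ^^ n) x0)"
proof -
  let ?s = "\<lambda>n. (F ^^ n) x0"
  have up: "?s n \<le> ?s (Suc n)" if "?s 0 \<le> ?s 1" for n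
  proof (induction n)
    case (Suc n) show ?case using mono[OF pos[of n] Suc.IH] by simp
  qed (use that in simp)
  have down: "?s (Suc n) \<le> ?s n" if "?s 1 \<le> ?s 0" for n
  proof (induction n)
    case (Suc n) show ?case using mono[OF pos[of "Suc n"] Suc.IH] by simp
  qed (use that in simp)
  show ?thesis
    using up down by (cases "?s 0 \<le> ?s 1") (auto simp: monoseq_Suc)
qed

lemma iterate_converges_pos:
  fixes F :: "real \<Rightarrow> real"
  assumes mono: "\<And>x y. 0 < x \<Longrightarrow> x \<le> y \<Longrightarrow> F x \<le> F y"
    and lo: "\<And>x. 0 < x \<Longrightarrow> lo \<le> F x" "0 < lo"
    and hi: "\<And>x. 0 < x \<Longrightarrow> F x \<le> hi"
    and x0: "0 < x0"
  shows "\<exists>L. (\<lambda>n. (F ^^ n) x0) \<longlonglongrightarrow> L \<and> 0 < L"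
proof -
  let ?s = "\<lambda>n. (F ^^ n) x0"
  have pos: "0 < ?s n" for n
    using lo x0 by (induction n) (auto intro: less_le_trans)
  have lower: "min x0 lo \<le> ?s n" for n
    using lo pos by (cases n) (auto simp: min.coboundedI2)
  have upper: "?s n \<le> max x0 hi" for n
    using hi pos x0 by (cases n) (auto simp: le_max_iff_disj)
  have "Bseq ?s"
    by (rule BseqI'[of _ "max x0 hi"]) (use upper pos in \<open>simp add: less_imp_le\<close>)
  moreover have "monoseq ?s"
    by (rule iterate_monoseq[OF mono pos])
  ultimately obtain L where L: "?s \<longlonglongrightarrow> L"
    using Bseq_monoseq_convergent convergent_def by blast
  have "min x0 lo \<le> L"
    by (rule LIMSEQ_le_const[OF L]) (use lower in auto)
  then show ?thesis
    using L lo(2) x0 by auto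
qed

lemma iterate_limit_fixed_point:
  fixes F :: "'a::t2_space \<Rightarrow> 'a"
  assumes lim: "(\<lambda>n. (F ^^ n) x0) \<longlonglongrightarrow> L" and cont: "isCont F L"
  shows "F L = L"
proof -
  have "(\<lambda>n. F ((F ^^ n) x0)) \<longlonglongrightarrow> F L"
    using isCont_tendsto_compose[OF cont lim] .
  moreover have "(\<lambda>n. F ((F ^^ n) x0)) \<longlonglongrightarrow> L"
    using LIMSEQ_Suc[OF lim] by simp
  ultimately show ?thesis
    by (rule LIMSEQ_unique)
qed

definition moebius :: "real \<Rightarrow> real \<Rightarrow> real" where
  "moebius c x = (1 + c * x) / (c + x)"

lemma moebius_pos: "0 < c \<Longrightarrow> 0 < x \<Longrightarrow> 0 < moebius c x"
  unfolding moebius_def by (simp add: add_pos_pos)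

text \<open>The basic identity behind monotonicity: the difference of two values
  has the sign of (c^2 - 1)(y - x).\<close>

lemma moebius_diff:
  assumes "0 < c" "0 < x" "0 < y"
  shows "moebius c y - moebius c x = (c * c - 1) * (y - x) / ((c + x) * (c + y))"
  using assms unfolding moebius_def by (simp add: field_simps)

lemma moebius_mono:
  assumes "1 \<le> c" "0 < x" "x \<le> y"
  shows "moebius c x \<le> moebius c y"
proof -
  have "1 \<le> c * c" using assms(1) by (metis mult_mono' mult_1 zero_le_one)
  then have "0 \<le> (c * c - 1) * (y - x) / ((c + x) * (c + y))"
    using assms by simp
  then show ?thesis
    using moebius_diff[of c x y] assms by simp
qed

lemma moebius_antimono:
  assumes "0 < c" "c \<le> 1" "0 < x" "x \<le> y"
  shows "moebius c y \<le> moebius c x"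
proof -
  have "c * c \<le> 1" using assms(1,2) by (simp add: mult_le_one)
  then have "(c * c - 1) * (y - x) / ((c + x) * (c + y)) \<le> 0"
    using assms by (simp add: divide_nonpos_pos mult_nonpos_nonneg)
  then show ?thesis
    using moebius_diff[of c x y] assms by simp
qed

text \<open>moebius c x is the average of 1/c and c with weights c and x, so it
  lies between them.\<close>

lemma moebius_weighted_average:
  assumes "0 < c" "0 < x"
  shows "moebius c x = (c * (1 / c) + x * c) / (c + x)"
  using assms unfolding moebius_def by (simp add: algebra_simps)

lemma moebius_bounds:
  assumes "0 < c" "0 < x"
  shows "min c (1 / c) \<le> moebius c x" and "moebius c x \<le> max c (1 / c)"
proof -
  let ?m = "min c (1 / c)" and ?M = "max c (1 / c)"
  have den: "0 < c + x" using assms by simp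
  have "?m * (c + x) = c * ?m + x * ?m" by (simp add: algebra_simps)
  also have "\<dots> \<le> c * (1 / c) + x * c"
    using assms by (intro add_mono mult_left_mono) auto
  finally show "?m \<le> moebius c x"
    using den by (simp only: moebius_weighted_average[OF assms] pos_le_divide_eq)
  have "c * (1 / c) + x * c \<le> c * ?M + x * ?M"
    using assms by (intro add_mono mult_left_mono) auto
  also have "\<dots> = ?M * (c + x)" by (simp add: algebra_simps)
  finally show "moebius c x \<le> ?M"
    using den by (simp only: moebius_weighted_average[OF assms] pos_divide_le_eq)
qed

lemma lemma4_f_moebius: "lemma4_f a b x = a^2 * (moebius (b^2) x)^2"
  by (simp add: lemma4_f_def moebius_def)

lemma lemma4_f_pos: "0 < a \<Longrightarrow> 0 < b \<Longrightarrow> 0 < x \<Longrightarrow> 0 < lemma4_f a b x"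
  using moebius_pos[of "b^2" x] by (simp add: lemma4_f_moebius)

lemma lemma4_f_bounds:
  assumes "0 < b" "0 < x"
  defines "c \<equiv> b^2"
  shows "a^2 * (min c (1 / c))^2 \<le> lemma4_f a b x"
    and "lemma4_f a b x \<le> a^2 * (max c (1 / c))^2"
proof -
  have c: "0 < c" using assms(1) by (simp add: c_def)
  have "0 \<le> min c (1 / c)" using c by simp
  then show "a^2 * (min c (1 / c))^2 \<le> lemma4_f a b x"
    unfolding lemma4_f_moebius c_def[symmetric]
    by (intro mult_left_mono power_mono moebius_bounds(1)[OF c assms(2)]) auto
  show "lemma4_f a b x \<le> a^2 * (max c (1 / c))^2"
    unfolding lemma4_f_moebius c_def[symmetric]
    using moebius_pos[OF c assms(2)]
    by (intro mult_left_mono power_mono moebius_bounds(2)[OF c assms(2)]) auto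
qed

lemma lemma4_f_mono:
  assumes "1 < b" "0 < x" "x \<le> y"
  shows "lemma4_f a b x \<le> lemma4_f a b y"
proof -
  have c: "1 \<le> b^2" using assms(1) by (simp add: one_le_power)
  have "0 < moebius (b^2) x" using assms by (intro moebius_pos) auto
  then show ?thesis
    unfolding lemma4_f_moebius using assms c
    by (intro mult_left_mono power_mono moebius_mono) auto
qed

lemma lemma4_f_antimono:
  assumes "0 < b" "b < 1" "0 < x" "x \<le> y"
  shows "lemma4_f a b y \<le> lemma4_f a b x"
proof -
  have c: "0 < b^2" "b^2 \<le> 1" using assms(1,2) by (auto simp: power_le_one)
  have "0 < moebius (b^2) y" using assms c by (intro moebius_pos) auto
  then show ?thesis
    unfolding lemma4_f_moebius using assms c
    by (intro mult_left_mono power_mono moebius_antimono) auto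
qed

lemma lemma4_f_isCont:
  assumes "0 < b" "0 < x"
  shows "isCont (lemma4_f a b) x"
proof -
  have "b^2 + x \<noteq> 0" using assms by (simp add: add_pos_pos less_imp_neq[symmetric])
  then show ?thesis
    unfolding lemma4_f_def[abs_def] by (intro continuous_intros) auto
qed

theorem lemma4:
  fixes a b :: real
  assumes "a > 0" and "b > 0"
  shows "(b > 1 \<longrightarrow> (\<forall>x0 > 0. \<exists>L. (\<lambda>n. (lemma4_f a b ^^ n) x0) \<longlonglongrightarrow> L
                                   \<and> L > 0 \<and> lemma4_f a b L = L))
       \<and> (b < 1 \<longrightarrow> (\<forall>y0 > 0. convergent (\<lambda>n. ((lemma4_f a b \<circ> lemma4_f a b) ^^ n) y0)))"
proof -
  let ?f = "lemma4_f a b" and ?c = "b^2"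
  let ?lo = "a^2 * (min ?c (1 / ?c))^2" and ?hi = "a^2 * (max ?c (1 / ?c))^2"
  have lo_pos: "0 < ?lo" using assms by (simp add: min_def)
  note f_pos = lemma4_f_pos[OF assms]
  note f_lo = lemma4_f_bounds(1)[OF assms(2)] and f_hi = lemma4_f_bounds(2)[OF assms(2)]
  show ?thesis
  proof (intro conjI impI allI)
    fix x0 :: real assume "1 < b" "0 < x0"
    then have "\<exists>L. (\<lambda>n. (?f ^^ n) x0) \<longlonglongrightarrow> L \<and> 0 < L"
      by (intro iterate_converges_pos[of ?f ?lo ?hi] lemma4_f_mono f_lo lo_pos f_hi)
    then obtain L where L: "(\<lambda>n. (?f ^^ n) x0) \<longlonglongrightarrow> L" "0 < L" by blast
    moreover have "?f L = L"
      using iterate_limit_fixed_point[OF L(1) lemma4_f_isCont[OF assms(2) L(2)]] .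
    ultimately show "\<exists>L. (\<lambda>n. (?f ^^ n) x0) \<longlonglongrightarrow> L \<and> 0 < L \<and> ?f L = L" by blast
  next
    fix y0 :: real assume b: "b < 1" and "0 < y0"
    have "(?f \<circ> ?f) x \<le> (?f \<circ> ?f) y" if "0 < x" "x \<le> y" for x y
      using that b assms f_pos by (simp add: lemma4_f_antimono)
    then show "convergent (\<lambda>n. ((?f \<circ> ?f) ^^ n) y0)"
      using iterate_converges_pos[of "?f \<circ> ?f" ?lo ?hi y0] \<open>0 < y0\<close> lo_pos f_lo f_hi f_pos
      by (auto simp: convergent_def)
  qed
qed

end
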